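(* For every LTL formula $\varphi$ in positive normal form and every $\sigma\in\Sigma^\omega$: $\sigma\models\varphi$ if and only if there exists $\varphi'\in\Delta_{\sigma_0}(\varphi)$ with $\sigma[1\dots]\models\varphi'$. (In the paper's notation: $\varphi\Leftrightarrow\bigvee_{x\in\Sigma,\ \varphi'\in\Delta_x(\varphi)} x\wedge\mathbf X\varphi'$.)
   Context: Fix a finite set $AP$, a finite alphabet $\Sigma$ and $I:\Sigma\to\mathcal P(AP)$. LTL formulae in positive normal form: $\varphi,\psi ::= p \mid \neg p \mid \mathbf{tt} \mid \mathbf{ff} \mid \varphi\wedge\psi \mid \varphi\vee\psi \mid \mathbf{X}\varphi \mid \varphi\,\mathbf{U}\,\psi \mid \varphi\,\mathbf{R}\,\psi$; $\mathbf F\varphi=\mathbf{tt}\,\mathbf U\varphi$, $\mathbf G\varphi=\mathbf{ff}\,\mathbf R\varphi$. Semantics on $\sigma\in\Sigma^\omega$ ($\sigma_i$ the $i$-th symbol, $\sigma[n\dots]$ the suffix from position $n$): $\sigma\models p$ iff $p\in I(\sigma_0)$; $\sigma\models\neg p$ iff $p\notin I(\sigma_0)$; $\mathbf{tt}$ always, $\mathbf{ff}$ never; $\wedge,\vee$ usual; $\sigma\models\mathbf X\varphi$ iff $\sigma[1\dots]\models\varphi$; $\sigma\models\varphi\mathbf U\psi$ iff $\exists n$, $\sigma[j\dots]\models\varphi$ for all $j<n$ and $\sigma[n\dots]\models\psi$; $\sigma\models\varphi\mathbf R\psi$ iff for all $n$, $\sigma[n\dots]\models\psi$ or $\sigma[j\dots]\models\varphi$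 for some $j<n$. A temporal formula is one whose outermost operator is not $\wedge$ or $\vee$; conjunctions of temporal formulae are normalised modulo associativity, commutativity and idempotence ($\mathbf{tt}$ is the empty conjunction). $\mathrm{SIMP}(\varphi\wedge\psi)=\{\varphi'\wedge\psi'\mid\varphi'\in\mathrm{SIMP}(\varphi),\psi'\in\mathrm{SIMP}(\psi)\}$, $\mathrm{SIMP}(\varphi\vee\psi)=\mathrm{SIMP}(\varphi)\cup\mathrm{SIMP}(\psi)$, $\mathrm{SIMP}(\varphi)=\{\varphi\}$ for temporal $\varphi$. For a literal $\ell$ ($p$ or $\neg p$), $x\models p$ iff $p\in I(x)$ and $x\models\neg p$ iff $p\notin I(x)$. Direct partial derivative $\Delta_x$ ($x\in\Sigma$): $\Delta_x(\mathbf{tt})=\{\mathbf{tt}\}$; $\Delta_x(\mathbf{ff})=\emptyset$; $\Delta_x(\ell)=\{\mathbf{tt}\}$ if $x\models\ell$, else $\emptyset$; $\Delta_x(\varphi\vee\psi)=\Delta_x(\varphi)\cup\Delta_x(\psi)$; $\Delta_x(\varphi\wedge\psi)=\{\varphi'\wedge\psi'\mid\varphi'\in\Delta_x(\varphi),\psi'\in\Delta_x(\psi)\}$; $\Delta_x(\mathbf X\varphi)=\mathrm{SIMP}(\varphi)$; $\Delta_x(\varphi\mathbf U\psi)=\Delta_x(\psi)\cup\{\varphi'\wedge(\varphi\mathbf U\psi)\mid\varphi'\in\Delta_x(\varphi)\}$; $\Delta_x(\varphi\mathbf R\psi)=\{\varphi'\wedge\psi'\mid\varphi'\in\Delta_x(\varphi),\psi'\in\Delta_x(\psi)\}\cup\{\psi'\wedge(\varphi\mathbf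 R\psi)\mid\psi'\in\Delta_x(\psi)\}$; $\Delta_x(\mathbf F\varphi)=\Delta_x(\varphi)\cup\{\mathbf F\varphi\}$; $\Delta_x(\mathbf G\varphi)=\{\varphi'\wedge\mathbf G\varphi\mid\varphi'\in\Delta_x(\varphi)\}$. *)

theory Defs
  imports Main
begin

datatype 'ap ltl =
    Prop 'ap | NProp 'ap | TT | FF
  | And "'ap ltl" "'ap ltl" | Or "'ap ltl" "'ap ltl"
  | Next "'ap ltl" | Until "'ap ltl" "'ap ltl" | Release "'ap ltl" "'ap ltl"

abbreviation Fin :: "'ap ltl \<Rightarrow> 'ap ltl" where "Fin \<phi> \<equiv> Until TT \<phi>"
abbreviation Glob :: "'ap ltl \<Rightarrow> 'ap ltl" where "Glob \<phi> \<equiv> Release FF \<phi>"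

definition suffix_from :: "(nat \<Rightarrow> 's) \<Rightarrow> nat \<Rightarrow> (nat \<Rightarrow> 's)" where
  "suffix_from \<sigma> n = (\<lambda>i. \<sigma> (n + i))"

(* semantics; I : Sigma -> P(AP) is the interpretation of letters *)
fun models :: "('s \<Rightarrow> 'ap set) \<Rightarrow> (nat \<Rightarrow> 's) \<Rightarrow> 'ap ltl \<Rightarrow> bool" where
  "models I \<sigma> (Prop p) = (p \<in> I (\<sigma> 0))"
| "models I \<sigma> (NProp p) = (p \<notin> I (\<sigma> 0))"
| "models I \<sigma> TT = True"
| "models I \<sigma> FF = False"
| "models I \<sigma> (And \<phi> \<psi>) = (models I \<sigma> \<phi> \<and> models I \<sigma> \<psi>)"
| "models I \<sigma> (Or \<phi> \<psi>) = (models I \<sigma> \<phi> \<or> models I \<sigma> \<psi>)"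
| "models I \<sigma> (Next \<phi>) = models I (suffix_from \<sigma> 1) \<phi>"
| "models I \<sigma> (Until \<phi> \<psi>) =
     (\<exists>n. (\<forall>j<n. models I (suffix_from \<sigma> j) \<phi>) \<and> models I (suffix_from \<sigma> n) \<psi>)"
| "models I \<sigma> (Release \<phi> \<psi>) =
     (\<forall>n. models I (suffix_from \<sigma> n) \<psi> \<or> (\<exists>j<n. models I (suffix_from \<sigma> j) \<phi>))"

(* Conjunctions of temporal formulae modulo associativity, commutativity and
   idempotence are represented as (finite) sets of formulae; the empty set is tt. *)
type_synonym 'ap conj = "'ap ltl set"

definition models_conj :: "('s \<Rightarrow> 'ap set) \<Rightarrow> (nat \<Rightarrow> 's) \<Rightarrow> 'ap conj \<Rightarrow> bool" where
  "models_conj I \<sigma> C = (\<forall>\<psi>\<in>C. models I \<sigma> \<psi>)"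

definition conj_prod :: "'ap conj set \<Rightarrow> 'ap conj set \<Rightarrow> 'ap conj set" where
  "conj_prod A B = {a \<union> b | a b. a \<in> A \<and> b \<in> B}"

fun SIMP :: "'ap ltl \<Rightarrow> 'ap conj set" where
  "SIMP (And \<phi> \<psi>) = conj_prod (SIMP \<phi>) (SIMP \<psi>)"
| "SIMP (Or \<phi> \<psi>) = SIMP \<phi> \<union> SIMP \<psi>"
| "SIMP TT = {{}}"
| "SIMP \<phi> = {{\<phi>}}"

(* direct partial derivative Delta_x; the rules for F and G are instances of
   those for U and R since F phi = tt U phi and G phi = ff R phi *)
fun Delta :: "('s \<Rightarrow> 'ap set) \<Rightarrow> 's \<Rightarrow> 'ap ltl \<Rightarrow> 'ap conj set" where
  "Delta I x TT = {{}}"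
| "Delta I x FF = {}"
| "Delta I x (Prop p) = (if p \<in> I x then {{}} else {})"
| "Delta I x (NProp p) = (if p \<notin> I x then {{}} else {})"
| "Delta I x (Or \<phi> \<psi>) = Delta I x \<phi> \<union> Delta I x \<psi>"
| "Delta I x (And \<phi> \<psi>) = conj_prod (Delta I x \<phi>) (Delta I x \<psi>)"
| "Delta I x (Next \<phi>) = SIMP \<phi>"
| "Delta I x (Until \<phi> \<psi>) =
     Delta I x \<psi> \<union> {a \<union> {Until \<phi> \<psi>} | a. a \<in> Delta I x \<phi>}"
| "Delta I x (Release \<phi> \<psi>) =
     conj_prod (Delta I x \<phi>) (Delta I x \<psi>) \<union> {b \<union> {Release \<phi> \<psi>} | b. b \<in> Delta I x \<psi>}"

end

theory Submission
  imports Defs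
begin

(* The derivative Delta_x is a one-step unfolding of the formula: the letter x
   discharges the literals, Next passes its argument (split into conjunct sets by
   SIMP) to the suffix, and Until and Release are unfolded by their expansion laws
     phi U psi  =  psi  or  (phi and X (phi U psi)),
     phi R psi  =  psi  and  (phi  or  X (phi R psi)).
   Reading a set of conjunct sets as a disjunction of conjunctions, conj_prod is
   conjunction and union is disjunction, so structural induction on the formula,
   generalised over the word, gives the equivalence. *)

lemma suffix_from_suffix_from [simp]: "suffix_from (suffix_from \<sigma> m) n = suffix_from \<sigma> (m + n)"
  by (simp add: suffix_from_def add.assoc)

lemma suffix_from_0 [simp]: "suffix_from \<sigma> 0 = \<sigma>"
  by (simp add: suffix_from_def)

lemma suffix_from_apply_0 [simp]: "suffix_from \<sigma> n 0 = \<sigma> n"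
  by (simp add: suffix_from_def)

lemma ex_nat_split_Suc: "(\<exists>n. P n) \<longleftrightarrow> P 0 \<or> (\<exists>n. P (Suc n))"
  by (metis not0_implies_Suc)

lemma all_nat_split_Suc: "(\<forall>n. P n) \<longleftrightarrow> P 0 \<and> (\<forall>n. P (Suc n))"
  by (metis not0_implies_Suc)

lemma models_Until_unfold:
  "models I \<sigma> (Until \<phi> \<psi>) \<longleftrightarrow>
     models I \<sigma> \<psi> \<or> models I \<sigma> \<phi> \<and> models I (suffix_from \<sigma> 1) (Until \<phi> \<psi>)"
  by (subst models.simps, subst ex_nat_split_Suc) (auto simp: All_less_Suc2)

lemma models_Release_unfold:
  "models I \<sigma> (Release \<phi> \<psi>) \<longleftrightarrow>
     models I \<sigma> \<psi> \<and> (models I \<sigma> \<phi> \<or> models I (suffix_from \<sigma> 1) (Release \<phi> \<psi>))"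
  by (subst models.simps, subst all_nat_split_Suc) (auto simp: Ex_less_Suc2)

lemma models_conj_Un [simp]:
  "models_conj I \<sigma> (A \<union> B) \<longleftrightarrow> models_conj I \<sigma> A \<and> models_conj I \<sigma> B"
  by (auto simp: models_conj_def)

lemma models_conj_empty [simp]: "models_conj I \<sigma> {}"
  by (simp add: models_conj_def)

lemma models_conj_singleton [simp]: "models_conj I \<sigma> {\<chi>} \<longleftrightarrow> models I \<sigma> \<chi>"
  by (simp add: models_conj_def)

lemma bex_conj_prod_models_conj:
  "(\<exists>C\<in>conj_prod A B. models_conj I \<sigma> C) \<longleftrightarrow>
     (\<exists>C\<in>A. models_conj I \<sigma> C) \<and> (\<exists>C\<in>B. models_conj I \<sigma> C)"
  unfolding conj_prod_def by (auto simp del: models_conj_Un) (metis models_conj_Un)+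

lemma bex_add_conjunct_models_conj:
  "(\<exists>C\<in>{a \<union> {\<chi>} | a. a \<in> A}. models_conj I \<sigma> C) \<longleftrightarrow>
     (\<exists>C\<in>A. models_conj I \<sigma> C) \<and> models I \<sigma> \<chi>"
  by (auto simp: models_conj_def)

lemma models_iff_bex_SIMP: "models I \<sigma> \<phi> \<longleftrightarrow> (\<exists>C\<in>SIMP \<phi>. models_conj I \<sigma> C)"
  by (induction \<phi> rule: SIMP.induct) (auto simp: bex_conj_prod_models_conj)

lemma models_iff_bex_Delta:
  "models I \<sigma> \<phi> \<longleftrightarrow> (\<exists>C\<in>Delta I (\<sigma> 0) \<phi>. models_conj I (suffix_from \<sigma> 1) C)"
proof (induction \<phi> arbitrary: \<sigma>)
  case (And \<phi> \<psi>)
  then show ?case by (simp add: bex_conj_prod_models_conj)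
next
  case (Next \<phi>)
  show ?case by (simp add: models_iff_bex_SIMP[symmetric])
next
  case (Until \<phi> \<psi>)
  show ?case
    by (subst models_Until_unfold)
       (simp only: Until.IH Delta.simps bex_Un bex_add_conjunct_models_conj)
next
  case (Release \<phi> \<psi>)
  show ?case
    by (subst models_Release_unfold)
       (simp only: Release.IH Delta.simps bex_Un bex_add_conjunct_models_conj
          bex_conj_prod_models_conj, blast)
qed auto

theorem lemma9:
  fixes I :: "'s::finite \<Rightarrow> 'ap::finite set"
    and \<sigma> :: "nat \<Rightarrow> 's" and \<phi> :: "'ap ltl"
  shows "models I \<sigma> \<phi> \<longleftrightarrow>
         (\<exists>\<phi>'\<in>Delta I (\<sigma> 0) \<phi>. models_conj I (suffix_from \<sigma> 1) \<phi>')"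
  by (rule models_iff_bex_Delta)

end
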